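(* The cellular automaton $F$ on the free group $G$ with generators $a,b$ and alphabet $A=\{0,1,\iota,\beta\}$ described in the context is not sensitive to initial conditions.
   Context: $G$ is the free group on $\{a,b\}$ with generating set $E=\{a,a^{-1},b,b^{-1}\}$, word norm $\|g\|$, and Cantor metric $d(x,y)=2^{-k}$, $k=\min\{\|g\|:x_g\neq y_g\}$, on $A^G$, with closed balls $B$. In a configuration $c\in A^G$, a position $g$ is free if $c_g\in\{0,1\}$ and $|\{g'\in gE: c_{g'}\in\{0,1\}\}|\geq 2$. A position $g$ is blocked in $c$ if either ($c_g=\iota$ and $c_{g'}\in\{\iota,\beta\}$ for all $g'\in gE$), or ($c_g=\beta$ and exactly one $g'\in gE$ has $c_{g'}=\iota$ and all other elements of $gE$ are free in $c$). The map $F:A^G\to A^G$ is defined by: $F(c)_g=c_g+\sum_{g'\in gE,\,c_{g'}\in\{0,1\}}c_{g'}\bmod 2$ if $c_g\in\{0,1\}$; $F(c)_g=c_g$ if $g$ is blocked in $c$; $F(c)_g=0$ otherwise. (It is a cellular automaton of radius 2.) $F$ is sensitive to initial conditions if $\exists\epsilon>0\,\forall x\,\forall\delta>0\,\exists t\in\mathbb{N}\,\exists y\in B(x,\delta)$ with $F^t(y)\notin B(F^t(x),\epsilon)$. *)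

theory Defs
  imports Main "HOL.Real"
begin

datatype letter = La | LaInv | Lb | LbInv

fun linv :: "letter \<Rightarrow> letter" where
  "linv La = LaInv" | "linv LaInv = La" | "linv Lb = LbInv" | "linv LbInv = Lb"

definition reduced :: "letter list \<Rightarrow> bool" where
  "reduced w \<longleftrightarrow> (\<forall>i. Suc i < length w \<longrightarrow> w ! Suc i \<noteq> linv (w ! i))"

typedef fg = "{w. reduced w}"
  by (rule exI[of _ "[]"]) (simp add: reduced_def)

definition gmul :: "fg \<Rightarrow> letter \<Rightarrow> fg" where
  "gmul g e = Abs_fg (if Rep_fg g \<noteq> [] \<and> last (Rep_fg g) = linv e
                      then butlast (Rep_fg g) else Rep_fg g @ [e])"

definition wnorm :: "fg \<Rightarrow> nat" where
  "wnorm g = length (Rep_fg g)"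

definition nbrs :: "fg \<Rightarrow> fg set" where
  "nbrs g = gmul g ` {La, LaInv, Lb, LbInv}"

datatype sym = S0 | S1 | Iota | Beta

type_synonym config = "fg \<Rightarrow> sym"

definition isbit :: "sym \<Rightarrow> bool" where
  "isbit s \<longleftrightarrow> s = S0 \<or> s = S1"

fun bval :: "sym \<Rightarrow> nat" where
  "bval S1 = 1" | "bval _ = 0"

definition cdist :: "config \<Rightarrow> config \<Rightarrow> real" where
  "cdist x y = (if x = y then 0
     else (1/2) ^ (LEAST k. \<exists>g. wnorm g = k \<and> x g \<noteq> y g))"

definition cball :: "config \<Rightarrow> real \<Rightarrow> config set" where
  "cball x r = {y. cdist x y \<le> r}"

definition free_pos :: "config \<Rightarrow> fg \<Rightarrow> bool" where
  "free_pos c g \<longleftrightarrow> isbit (c g) \<and> card {g' \<in> nbrs g. isbit (c g')} \<ge> 2"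

definition blocked :: "config \<Rightarrow> fg \<Rightarrow> bool" where
  "blocked c g \<longleftrightarrow>
     (c g = Iota \<and> (\<forall>g'\<in>nbrs g. c g' = Iota \<or> c g' = Beta)) \<or>
     (c g = Beta \<and> (\<exists>!g'. g' \<in> nbrs g \<and> c g' = Iota)
        \<and> (\<forall>g'\<in>nbrs g. c g' \<noteq> Iota \<longrightarrow> free_pos c g'))"

definition CA :: "config \<Rightarrow> config" where
  "CA c g =
     (if isbit (c g) then
        (if odd (bval (c g) + (\<Sum>g'\<in>{g' \<in> nbrs g. isbit (c g')}. bval (c g')))
         then S1 else S0)
      else if blocked c g then c g
      else S0)"

definition sensitive :: "(config \<Rightarrow> config) \<Rightarrow> bool" where
  "sensitive F \<longleftrightarrow> (\<exists>\<epsilon>>0. \<forall>x. \<forall>\<delta>>0. \<exists>t::nat. \<exists>y \<in> cball x \<delta>.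
      (F ^^ t) y \<notin> cball ((F ^^ t) x) \<epsilon>)"

end

theory Submission
  imports Defs
begin

text \<open>Call a configuration a wall of radius k if it is \<iota> on the open ball of radius k,
\<beta> on its boundary sphere and binary on the next two spheres. In a wall every cell of the
closed ball is blocked: an interior cell sees only \<iota> and \<beta>, and a sphere cell has exactly
one inward neighbour while its outward neighbours are free, since every cell has two outward
neighbours. Bits stay bits, so a wall stays a wall with the same ball. Being a wall depends
only on the ball of radius k + 2, so every configuration close enough to a wall is a wall too,
and the two orbits agree on the ball of radius k forever.\<close>

lemma linv_linv [simp]: "linv (linv e) = e"
  by (cases e) auto

lemma reduced_butlast: "reduced w \<Longrightarrow> reduced (butlast w)"
  unfolding reduced_def by (auto simp: nth_butlast)

lemma reduced_snoc:
  assumes "reduced w" and "w \<noteq> [] \<Longrightarrow> last w \<noteq> linv e"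
  shows "reduced (w @ [e])"
  unfolding reduced_def
proof (intro allI impI)
  fix i assume i: "Suc i < length (w @ [e])"
  show "(w @ [e]) ! Suc i \<noteq> linv ((w @ [e]) ! i)"
  proof (cases "Suc i < length w")
    case True
    then show ?thesis using assms(1) unfolding reduced_def by (auto simp: nth_append)
  next
    case False
    then have last_pos: "Suc i = length w" using i by simp
    then have "w \<noteq> []" by auto
    then have "w ! i = last w" using last_pos by (metis diff_Suc_1 last_conv_nth)
    then show ?thesis using assms(2) last_pos \<open>w \<noteq> []\<close> by (auto simp: nth_append)
  qed
qed

lemma Rep_fg_gmul:
  "Rep_fg (gmul g e) = (if Rep_fg g \<noteq> [] \<and> last (Rep_fg g) = linv e
                        then butlast (Rep_fg g) else Rep_fg g @ [e])"
proof -
  have r: "reduced (Rep_fg g)" using Rep_fg by simp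
  have "reduced (if Rep_fg g \<noteq> [] \<and> last (Rep_fg g) = linv e
                 then butlast (Rep_fg g) else Rep_fg g @ [e])"
    using reduced_butlast[OF r] reduced_snoc[OF r, of e] by auto
  then show ?thesis unfolding gmul_def by (simp add: Abs_fg_inverse)
qed

lemma finite_nbrs: "finite (nbrs g)"
  unfolding nbrs_def by simp

lemma wnorm_nbrs:
  "g' \<in> nbrs g \<Longrightarrow> wnorm g' = wnorm g + 1 \<or> wnorm g' + 1 = wnorm g"
  unfolding nbrs_def wnorm_def by (auto simp: Rep_fg_gmul)

lemma ex1_nbrs_wnorm_pred:
  assumes "1 \<le> wnorm g"
  shows "\<exists>!g'. g' \<in> nbrs g \<and> wnorm g' + 1 = wnorm g"
proof
  have ne: "Rep_fg g \<noteq> []" using assms unfolding wnorm_def by auto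
  let ?e = "linv (last (Rep_fg g))"
  have "?e \<in> {La, LaInv, Lb, LbInv}" by (cases ?e) auto
  then have "gmul g ?e \<in> nbrs g" unfolding nbrs_def by (rule imageI)
  moreover have "wnorm (gmul g ?e) + 1 = wnorm g"
    using ne unfolding wnorm_def by (simp add: Rep_fg_gmul)
  ultimately show "gmul g ?e \<in> nbrs g \<and> wnorm (gmul g ?e) + 1 = wnorm g" ..
next
  fix g' assume g': "g' \<in> nbrs g \<and> wnorm g' + 1 = wnorm g"
  then obtain e where e: "g' = gmul g e" unfolding nbrs_def by auto
  have "Rep_fg g \<noteq> [] \<and> last (Rep_fg g) = linv e"
    using g' unfolding e wnorm_def by (auto simp: Rep_fg_gmul split: if_splits)
  then show "g' = gmul g (linv (last (Rep_fg g)))"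
    unfolding e by simp
qed

lemma two_nbrs_wnorm_succ:
  "\<exists>g1 g2. g1 \<in> nbrs g \<and> g2 \<in> nbrs g \<and> g1 \<noteq> g2 \<and>
     wnorm g1 = wnorm g + 1 \<and> wnorm g2 = wnorm g + 1"
proof -
  obtain e1 e2 where e: "e1 \<noteq> e2" "e1 \<in> {La, LaInv, Lb, LbInv}" "e2 \<in> {La, LaInv, Lb, LbInv}"
    and "\<not> (Rep_fg g \<noteq> [] \<and> last (Rep_fg g) = linv e1)"
        "\<not> (Rep_fg g \<noteq> [] \<and> last (Rep_fg g) = linv e2)"
  proof (cases "Rep_fg g = [] \<or> last (Rep_fg g) \<in> {La, LaInv}")
    case True
    then show ?thesis using that[of Lb LbInv] by auto
  next
    case False
    then show ?thesis using that[of La LaInv] by auto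
  qed
  then have "Rep_fg (gmul g e1) = Rep_fg g @ [e1]" "Rep_fg (gmul g e2) = Rep_fg g @ [e2]"
    by (simp_all only: Rep_fg_gmul if_False)
  then have "gmul g e1 \<noteq> gmul g e2"
    and "wnorm (gmul g e1) = wnorm g + 1" "wnorm (gmul g e2) = wnorm g + 1"
    using e(1) unfolding wnorm_def by auto
  moreover have "gmul g e1 \<in> nbrs g" "gmul g e2 \<in> nbrs g"
    using e unfolding nbrs_def by auto
  ultimately show ?thesis by blast
qed

lemma cdist_le_half_pow_iff:
  "cdist x y \<le> (1/2) ^ (m + 1) \<longleftrightarrow> (\<forall>g. wnorm g \<le> m \<longrightarrow> x g = y g)"
proof (cases "x = y")
  case False
  define L where "L = (LEAST k. \<exists>g. wnorm g = k \<and> x g \<noteq> y g)"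
  from False obtain g0 where "x g0 \<noteq> y g0" by auto
  then obtain g1 where g1: "wnorm g1 = L" "x g1 \<noteq> y g1"
    using LeastI[of "\<lambda>k. \<exists>g. wnorm g = k \<and> x g \<noteq> y g" "wnorm g0"] unfolding L_def by blast
  have L_le: "L \<le> wnorm g" if "x g \<noteq> y g" for g
    unfolding L_def using that by (intro Least_le) auto
  have "cdist x y \<le> (1/2) ^ (m + 1) \<longleftrightarrow> (1/2::real) ^ L \<le> (1/2) ^ (m + 1)"
    using False by (simp only: cdist_def L_def if_False)
  also have "\<dots> \<longleftrightarrow> m < L" by (subst power_decreasing_iff) auto
  also have "\<dots> \<longleftrightarrow> (\<forall>g. wnorm g \<le> m \<longrightarrow> x g = y g)"
  proof
    assume "m < L"
    then show "\<forall>g. wnorm g \<le> m \<longrightarrow> x g = y g" using L_le by fastforce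
  next
    assume "\<forall>g. wnorm g \<le> m \<longrightarrow> x g = y g"
    then show "m < L" using g1 by (cases "m < L") auto
  qed
  finally show ?thesis .
qed (simp add: cdist_def)

lemma isbit_CA: "isbit (c g) \<Longrightarrow> isbit (CA c g)"
  unfolding CA_def by (simp add: isbit_def)

lemma CA_eq_if_blocked: "blocked c g \<Longrightarrow> CA c g = c g"
  unfolding CA_def blocked_def isbit_def by auto

lemma free_pos_if_outward_nbrs_bits:
  assumes "isbit (c h)" and "\<And>g'. g' \<in> nbrs h \<Longrightarrow> wnorm g' = wnorm h + 1 \<Longrightarrow> isbit (c g')"
  shows "free_pos c h"
proof -
  obtain g1 g2 where g: "g1 \<in> nbrs h" "g2 \<in> nbrs h" "g1 \<noteq> g2"
    "wnorm g1 = wnorm h + 1" "wnorm g2 = wnorm h + 1"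
    using two_nbrs_wnorm_succ by blast
  have "{g1, g2} \<subseteq> {g' \<in> nbrs h. isbit (c g')}" using g assms(2) by auto
  then have "card {g1, g2} \<le> card {g' \<in> nbrs h. isbit (c g')}"
    by (rule card_mono[rotated]) (simp add: finite_nbrs)
  then show ?thesis unfolding free_pos_def using assms(1) g(3) by simp
qed

definition wall :: "nat \<Rightarrow> config \<Rightarrow> bool" where
  "wall k c \<longleftrightarrow> (\<forall>g. (wnorm g < k \<longrightarrow> c g = Iota) \<and> (wnorm g = k \<longrightarrow> c g = Beta)
      \<and> (wnorm g = k + 1 \<longrightarrow> isbit (c g)) \<and> (wnorm g = k + 2 \<longrightarrow> isbit (c g)))"

lemma wallD:
  assumes "wall k c"
  shows "wnorm g < k \<Longrightarrow> c g = Iota" and "wnorm g = k \<Longrightarrow> c g = Beta"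
    and "wnorm g = k + 1 \<Longrightarrow> isbit (c g)" and "wnorm g = k + 2 \<Longrightarrow> isbit (c g)"
  using assms unfolding wall_def by blast+

lemma wall_cong:
  assumes "wall k c" and "\<forall>g. wnorm g \<le> k + 2 \<longrightarrow> c g = c' g"
  shows "wall k c'"
  unfolding wall_def using wallD[OF assms(1)] assms(2) by simp

lemma wall_eq_on_ball:
  assumes "wall k c" "wall k c'" "wnorm g \<le> k"
  shows "c g = c' g"
  using wallD(1,2)[OF assms(1)] wallD(1,2)[OF assms(2)] assms(3) by (cases "wnorm g < k") auto

lemma blocked_if_wall_interior:
  assumes "wall k c" "wnorm g < k"
  shows "blocked c g"
proof -
  have "c g' = Iota \<or> c g' = Beta" if "g' \<in> nbrs g" for g'
  proof -
    have "wnorm g' < k \<or> wnorm g' = k" using wnorm_nbrs[OF that] assms(2) by auto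
    then show ?thesis using wallD(1,2)[OF assms(1)] by blast
  qed
  moreover have "c g = Iota" using wallD(1)[OF assms] .
  ultimately show ?thesis unfolding blocked_def by auto
qed

lemma blocked_if_wall_sphere:
  assumes "wall k c" "1 \<le> k" "wnorm g = k"
  shows "blocked c g"
proof -
  have nbr_cases: "wnorm g' + 1 = k \<and> c g' = Iota \<or> wnorm g' = k + 1 \<and> isbit (c g')"
    if "g' \<in> nbrs g" for g'
    using wnorm_nbrs[OF that] wallD(1,3)[OF assms(1), of g'] assms(3) by auto
  have "g' \<in> nbrs g \<and> c g' = Iota \<longleftrightarrow> g' \<in> nbrs g \<and> wnorm g' + 1 = wnorm g" for g'
    using nbr_cases[of g'] assms(3) by (auto simp: isbit_def)
  then have "\<exists>!g'. g' \<in> nbrs g \<and> c g' = Iota"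
    using ex1_nbrs_wnorm_pred[of g] assms(2,3) by simp
  moreover have "free_pos c g'" if "g' \<in> nbrs g" "c g' \<noteq> Iota" for g'
  proof (rule free_pos_if_outward_nbrs_bits)
    have g': "wnorm g' = k + 1" "isbit (c g')" using nbr_cases[OF that(1)] that(2) by auto
    then show "isbit (c g')" by simp
    show "isbit (c g'')" if "g'' \<in> nbrs g'" "wnorm g'' = wnorm g' + 1" for g''
      using wallD(4)[OF assms(1)] that(2) g'(1) by simp
  qed
  moreover have "c g = Beta" using wallD(2)[OF assms(1,3)] .
  ultimately show ?thesis unfolding blocked_def by auto
qed

lemma wall_CA:
  assumes "wall k c" "1 \<le> k"
  shows "wall k (CA c)"
proof -
  have fixed: "CA c g = c g" if "wnorm g \<le> k" for g
  proof (cases "wnorm g < k")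
    case True
    then show ?thesis by (intro CA_eq_if_blocked blocked_if_wall_interior[OF assms(1)])
  next
    case False
    with that have "wnorm g = k" by simp
    then show ?thesis by (intro CA_eq_if_blocked blocked_if_wall_sphere[OF assms])
  qed
  show ?thesis
    unfolding wall_def
  proof (intro allI conjI impI)
    fix g
    show "wnorm g < k \<Longrightarrow> CA c g = Iota" using fixed wallD(1)[OF assms(1)] by simp
    show "wnorm g = k \<Longrightarrow> CA c g = Beta" using fixed wallD(2)[OF assms(1)] by simp
    show "wnorm g = k + 1 \<Longrightarrow> isbit (CA c g)" using isbit_CA wallD(3)[OF assms(1)] by blast
    show "wnorm g = k + 2 \<Longrightarrow> isbit (CA c g)" using isbit_CA wallD(4)[OF assms(1)] by blast
  qed
qed

lemma wall_funpow_CA: "wall k c \<Longrightarrow> 1 \<le> k \<Longrightarrow> wall k ((CA ^^ t) c)"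
  by (induction t) (simp_all add: wall_CA)

lemma cdist_funpow_CA_le_if_wall:
  assumes "wall k x" "1 \<le> k" "cdist x y \<le> (1/2) ^ (k + 3)"
  shows "cdist ((CA ^^ t) x) ((CA ^^ t) y) \<le> (1/2) ^ (k + 1)"
proof -
  have "k + 2 + 1 = k + 3" by simp
  with assms(3) have "cdist x y \<le> (1/2) ^ (k + 2 + 1)" by (simp only:)
  then have "\<forall>g. wnorm g \<le> k + 2 \<longrightarrow> x g = y g" by (simp only: cdist_le_half_pow_iff)
  then have "wall k y" by (rule wall_cong[OF assms(1)])
  then have "wall k ((CA ^^ t) x)" "wall k ((CA ^^ t) y)"
    using wall_funpow_CA assms(1,2) by blast+
  then have "\<forall>g. wnorm g \<le> k \<longrightarrow> (CA ^^ t) x g = (CA ^^ t) y g"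
    using wall_eq_on_ball by blast
  then show ?thesis by (simp only: cdist_le_half_pow_iff)
qed

theorem lemma7:
  shows "\<not> sensitive CA"
proof
  assume "sensitive CA"
  then obtain \<epsilon> :: real where "\<epsilon> > 0" and sens:
    "\<And>x \<delta>. \<delta> > 0 \<Longrightarrow> \<exists>t::nat. \<exists>y \<in> cball x \<delta>. (CA ^^ t) y \<notin> cball ((CA ^^ t) x) \<epsilon>"
    unfolding sensitive_def by blast
  then obtain n where "(1/2::real) ^ n < \<epsilon>" using real_arch_pow_inv[of \<epsilon> "1/2"] by auto
  define k where "k = n + 1"
  have "(1/2::real) ^ (k + 1) \<le> (1/2) ^ n" unfolding k_def by simp
  with \<open>(1/2) ^ n < \<epsilon>\<close> have eps: "(1/2) ^ (k + 1) \<le> \<epsilon>" by linarith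
  define x :: config where
    "x g = (if wnorm g < k then Iota else if wnorm g = k then Beta else S0)" for g
  have "wall k x" unfolding wall_def x_def isbit_def by auto
  obtain t y where "cdist x y \<le> (1/2) ^ (k + 3)"
    and escape: "cdist ((CA ^^ t) x) ((CA ^^ t) y) > \<epsilon>"
    using sens[of "(1/2) ^ (k + 3)" x] unfolding cball_def by (auto simp: not_le)
  moreover have "1 \<le> k" unfolding k_def by simp
  ultimately have "cdist ((CA ^^ t) x) ((CA ^^ t) y) \<le> (1/2) ^ (k + 1)"
    using \<open>wall k x\<close> by (intro cdist_funpow_CA_le_if_wall)
  with eps escape show False by linarith
qed

end
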